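(* For every integer $n\ge2$, the coefficient of $u\,v^{n}w^{n-1}$ in $P_{n/(n+1)}(u,v,w)$ (i.e. the coefficient at the lattice point $(1,n)$ of the Newton polygon) equals $4$.
   Context: Markov polynomials. Let $x,y,z$ be indeterminates. Consider the set consisting of all rationals $\rho\in[0,1]$, each written in lowest terms $\rho=a/b$ with integers $a\ge 0$, $b\ge 1$, together with the formal symbol $1/0$. Define Laurent polynomials $M_\rho(x,y,z)$ recursively by $M_{1/0}=y$, $M_{0/1}=x$, $M_{1/1}=\frac{x^2+y^2}{z}$, and: whenever $a/b$, $c/d$ are in this set with $|ad-bc|=1$ and $(a+2c)/(b+2d)\in[0,1]$, then $M_{\frac{a+2c}{b+2d}}=\big(M_{c/d}^2+M_{\frac{a+c}{b+d}}^2\big)/M_{a/b}$. This determines $M_\rho$ for every rational $\rho\in[0,1]$. Numerator. For coprime $1\le a\le b$, $P_{a/b}(u,v,w)$ denotes the homogeneous polynomial of degree $a+b-1$ such that $M_{a/b}(x,y,z)=P_{a/b}(x^2,y^2,z^2)/(x^{a-1}y^{b-1}z^{a+b-1})$; its existence is known. *)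

theory Defs
  imports "HOL-Computational_Algebra.Polynomial" "HOL-Computational_Algebra.Fraction_Field"
begin

(* Polynomials in three variables with integer coefficients are represented as
   nested univariate polynomials  int poly poly poly :
   innermost variable = first variable (x resp. u),
   middle variable    = second variable (y resp. v),
   outer variable     = third variable (z resp. w).
   Laurent polynomials in x,y,z live in the field of fractions  (int poly poly poly) fract. *)

type_synonym poly3 = "int poly poly poly"
type_synonym rat3 = "poly3 fract"

definition varX :: poly3 where "varX = [:[: monom (1::int) 1 :]:]"
definition varY :: poly3 where "varY = [: monom (1::int poly) 1 :]"
definition varZ :: poly3 where "varZ = monom (1::int poly poly) 1"

definition coeff3 :: "poly3 \<Rightarrow> nat \<Rightarrow> nat \<Rightarrow> nat \<Rightarrow> int" where
  "coeff3 P i j k = coeff (coeff (coeff P k) j) i"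

definition frac :: "poly3 \<Rightarrow> rat3" where "frac p = Fract p 1"

definition X :: rat3 where "X = frac varX"
definition Y :: rat3 where "Y = frac varY"
definition Z :: rat3 where "Z = frac varZ"

(* the index set: pairs (a,b) representing a/b in lowest terms with a/b in [0,1], plus 1/0 *)
definition markov_dom :: "(nat \<times> nat) set" where
  "markov_dom = {(a,b). coprime a b \<and> (a \<le> b \<or> (a,b) = (1,0))}"

definition markov_rel :: "(nat \<times> nat \<Rightarrow> rat3) \<Rightarrow> bool" where
  "markov_rel M \<longleftrightarrow>
     M (1,0) = Y \<and> M (0,1) = X \<and> M (1,1) = (X^2 + Y^2) / Z \<and>
     (\<forall>a b c d. (a,b) \<in> markov_dom \<longrightarrow> (c,d) \<in> markov_dom \<longrightarrow>
        \<bar>int a * int d - int b * int c\<bar> = 1 \<longrightarrow> a + 2*c \<le> b + 2*d \<longrightarrow>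
        M (a + 2*c, b + 2*d) = ((M (c,d))^2 + (M (a+c, b+d))^2) / M (a,b)) \<and>
     (\<forall>p. p \<notin> markov_dom \<longrightarrow> M p = 0)"

definition markov_M :: "nat \<times> nat \<Rightarrow> rat3" where
  "markov_M = (THE M. markov_rel M)"

definition sq_subst :: "poly3 \<Rightarrow> poly3" where
  "sq_subst P = (\<Sum>k\<le>degree P. \<Sum>j\<le>degree (coeff P k). \<Sum>i\<le>degree (coeff (coeff P k) j).
      of_int (coeff3 P i j k) * varX^(2*i) * varY^(2*j) * varZ^(2*k))"

definition homogeneous3 :: "poly3 \<Rightarrow> nat \<Rightarrow> bool" where
  "homogeneous3 P N \<longleftrightarrow> (\<forall>i j k. coeff3 P i j k \<noteq> 0 \<longrightarrow> i + j + k = N)"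

definition markov_P :: "nat \<Rightarrow> nat \<Rightarrow> poly3" where
  "markov_P a b = (THE P. homogeneous3 P (a + b - 1) \<and>
      markov_M (a,b) = frac (sq_subst P) / frac (varX^(a-1) * varY^(b-1) * varZ^(a+b-1)))"

end

theory Submission
  imports Defs
begin

text \<open>Write \<open>M\<^sub>k\<close> and \<open>P\<^sub>k\<close> for \<open>M\<^sub>k\<^sub>/\<^sub>(\<^sub>k\<^sub>+\<^sub>1\<^sub>)\<close> and its numerator. The defining relation,
  applied to \<open>a/b = k/(k+1)\<close> and \<open>c/d = 1/1\<close>, reads
  \<open>M\<^sub>k\<^sub>+\<^sub>2 M\<^sub>k = M\<^sub>1\<^sub>/\<^sub>1\<^sup>2 + M\<^sub>k\<^sub>+\<^sub>1\<^sup>2\<close>. Hence the numerators obey the linear recurrence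
  \<open>P\<^sub>k\<^sub>+\<^sub>2 = (u+v)(u+v+w) P\<^sub>k\<^sub>+\<^sub>1 - u v w\<^sup>2 P\<^sub>k\<close>: for a linear recurrence the
  Casoratian \<open>P\<^sub>k\<^sub>+\<^sub>2 P\<^sub>k - P\<^sub>k\<^sub>+\<^sub>1\<^sup>2\<close> is multiplied by \<open>u v w\<^sup>2\<close> in each step, which
  is exactly what the quadratic relation demands once the monomial denominators are cleared.
  Modulo \<open>u\<^sup>2\<close> the recurrence gives
  \<open>P\<^sub>n \<equiv> v\<^sup>n\<^sup>+\<^sup>1 (v+w)\<^sup>n\<^sup>-\<^sup>1 + u v\<^sup>n (4 w\<^sup>n\<^sup>-\<^sup>1 + v H)\<close> for \<open>n \<ge> 2\<close>, whence the
  coefficient \<open>4\<close>. That \<open>M\<close> is well defined at all rests on every slope other than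
  \<open>1/0, 0/1, 1/1\<close> arising from exactly one admissible pair \<open>a/b, c/d\<close>.\<close>

section \<open>Well-definedness of the Markov Laurent polynomials\<close>

lemma coprime_of_unimodular:
  assumes "\<bar>int a * int d - int b * int c\<bar> = 1"
  shows "coprime a b"
proof (rule coprimeI)
  fix g assume "g dvd a" "g dvd b"
  then have "int g dvd \<bar>int a * int d - int b * int c\<bar>"
    by (simp add: dvd_diff)
  with assms show "is_unit g" by simp
qed

text \<open>The difference of the two points is an integer multiple of \<open>(p,q)\<close>; inside the box
  only \<open>0\<close> remains, as \<open>\<plusminus>(p,q)\<close> would place one of the points at the origin.\<close>

lemma unimodular_box_unique:
  fixes e1 e2 f1 f2 p q s :: int
  assumes "0 \<le> e1" "e1 \<le> p" "0 \<le> e2" "e2 \<le> q" "0 \<le> f1" "f1 \<le> p" "0 \<le> f2" "f2 \<le> q"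
    and e: "e1*q - e2*p = s" and f: "f1*q - f2*p = s" and s: "\<bar>s\<bar> = 1"
  shows "e1 = f1 \<and> e2 = f2"
proof -
  define g1 where "g1 = e1 - f1"
  define g2 where "g2 = e2 - f2"
  define k where "k = s * (g2*e1 - g1*e2)"
  have parallel: "g1 * q = g2 * p" using e f unfolding g1_def g2_def by (simp add: algebra_simps)
  have ss: "s*s = 1" using s by (metis abs_mult_self_eq mult_1)
  have "g1 * s = p * (g2*e1 - g1*e2)"
  proof -
    have "g1 * s = g1*e1*q - g1*e2*p" unfolding e[symmetric] by (simp add: algebra_simps)
    also have "\<dots> = g2*p*e1 - g1*e2*p" using parallel by (metis mult.assoc mult.commute)
    finally show ?thesis by (simp add: algebra_simps)
  qed
  then have g1: "g1 = p * k" unfolding k_def by (metis mult.assoc mult.commute mult_1 ss)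
  have "g2 * s = q * (g2*e1 - g1*e2)"
  proof -
    have "g2 * s = g2*e1*q - g2*e2*p" unfolding e[symmetric] by (simp add: algebra_simps)
    also have "\<dots> = g2*e1*q - g1*q*e2" using parallel by (metis mult.assoc mult.commute)
    finally show ?thesis by (simp add: algebra_simps)
  qed
  then have g2: "g2 = q * k" unfolding k_def by (metis mult.assoc mult.commute mult_1 ss)
  have "p + q > 0" using assms by (cases "p = 0 \<and> q = 0") auto
  moreover have "\<bar>k\<bar> * (p + q) = \<bar>g1\<bar> + \<bar>g2\<bar>" using g1 g2 assms
    by (simp add: abs_mult distrib_left mult.commute)
  moreover have "\<bar>g1\<bar> + \<bar>g2\<bar> \<le> p + q" unfolding g1_def g2_def using assms by auto
  ultimately have "\<bar>k\<bar> \<le> 1" by (metis mult_le_cancel_right2 not_less)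
  moreover have "k \<noteq> 1"
  proof
    assume "k = 1"
    then have "e1 = p" "f1 = 0" "e2 = q" "f2 = 0" using g1 g2 assms unfolding g1_def g2_def by auto
    then show False using assms by auto
  qed
  moreover have "k \<noteq> -1"
  proof
    assume "k = -1"
    then have "e1 = 0" "f1 = p" "e2 = 0" "f2 = q" using g1 g2 assms unfolding g1_def g2_def by auto
    then show False using assms by auto
  qed
  ultimately have "k = 0" by auto
  then show ?thesis using g1 g2 unfolding g1_def g2_def by simp
qed

definition markov_split :: "nat \<times> nat \<Rightarrow> nat \<times> nat \<times> nat \<times> nat \<Rightarrow> bool" where
  "markov_split t x \<longleftrightarrow> (case x of (a,b,c,d) \<Rightarrow> (a,b) \<in> markov_dom \<and> (c,d) \<in> markov_dom \<and>
     \<bar>int a * int d - int b * int c\<bar> = 1 \<and> a + 2*c \<le> b + 2*d \<and> t = (a+2*c, b+2*d))"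

lemma markov_split_unique:
  assumes "markov_split t (a,b,c,d)" "markov_split t (a',b',c',d')"
  shows "(a,b,c,d) = (a',b',c',d')"
proof -
  define s where "s = int a * int d - int b * int c"
  define s' where "s' = int a' * int d' - int b' * int c'"
  have h: "\<bar>s\<bar> = 1" "\<bar>s'\<bar> = 1" "t = (a+2*c, b+2*d)" "t = (a'+2*c', b'+2*d')"
    using assms unfolding markov_split_def s_def s'_def by auto
  define p where "p = int (a + 2*c)"
  define q where "q = int (b + 2*d)"
  have p': "p = int (a' + 2*c')" and q': "q = int (b' + 2*d')" using h unfolding p_def q_def by auto
  have detc: "int c * q - int d * p = - s" unfolding p_def q_def s_def by (simp add: algebra_simps)
  have detc': "int c' * q - int d' * p = - s'" unfolding p' q' s'_def by (simp add: algebra_simps)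
  have detac: "int (a+c) * q - int (b+d) * p = s" unfolding p_def q_def s_def by (simp add: algebra_simps)
  have detac': "int (a'+c') * q - int (b'+d') * p = s'" unfolding p' q' s'_def by (simp add: algebra_simps)
  consider "s = s'" | "s = - s'" using h by fastforce
  then show ?thesis
  proof cases
    case 1
    then have "int c = int c' \<and> int d = int d'"
      using unimodular_box_unique[of "int c" p "int d" q "int c'" "int d'" "-s"] detc detc' h
      unfolding p_def q_def p' q' by auto
    then show ?thesis using h by auto
  next
    case 2
    then have "c' = a + c" "d' = b + d" "c = a' + c'" "d = b' + d'"
      using unimodular_box_unique[of "int c'" p "int d'" q "int (a+c)" "int (b+d)" s] detc' detac
        unimodular_box_unique[of "int c" p "int d" q "int (a'+c')" "int (b'+d')" "-s"] detc detac' h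
      unfolding p_def q_def p' q' by auto
    then have "s = 0" unfolding s_def by simp
    with h show ?thesis by simp
  qed
qed

lemma markov_splitI:
  fixes a1 a2 c1 c2 p q :: int
  assumes nonneg: "0 \<le> a1" "0 \<le> a2" "0 \<le> c1" "0 \<le> c2"
    and pq: "a1 + 2*c1 = p" "a2 + 2*c2 = q" "p < q" "2 \<le> q"
    and det: "\<bar>a1*c2 - a2*c1\<bar> = 1"
  shows "markov_split (nat p, nat q) (nat a1, nat a2, nat c1, nat c2)"
proof -
  have slope: "x \<le> y \<or> (x = 1 \<and> y = 0 \<and> q = 2)"
    if "0 \<le> y" "\<bar>x * q - y * p\<bar> \<le> 2" for x y
  proof (rule ccontr)
    assume contra: "\<not> ?thesis"
    then have "1 \<le> x - y" by simp
    have "y * 1 \<le> y * (q - p)" using \<open>0 \<le> y\<close> pq by (intro mult_left_mono) auto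
    then have "(x - y) * q + y \<le> 2" using that by (simp add: algebra_simps)
    moreover have "(x - y) * 2 \<le> (x - y) * q" using \<open>1 \<le> x - y\<close> pq
      by (intro mult_left_mono) auto
    ultimately have "(x - y) * 2 \<le> 2" using \<open>0 \<le> y\<close> by linarith
    then have "x - y = 1" using \<open>1 \<le> x - y\<close> by presburger
    with \<open>(x - y) * q + y \<le> 2\<close> pq \<open>0 \<le> y\<close> contra show False by auto
  qed
  have det_c: "\<bar>c1 * q - c2 * p\<bar> = 1" using det unfolding pq(1,2)[symmetric]
    by (simp add: algebra_simps abs_minus_commute)
  have det_a: "\<bar>a1 * q - a2 * p\<bar> = 2" using det unfolding pq(1,2)[symmetric]
    by (simp add: algebra_simps abs_mult[symmetric])
  have "c1 \<le> c2" using slope[where x = c1 and y = c2] det_c nonneg by auto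
  moreover have "a1 \<le> a2 \<or> (a1 = 1 \<and> a2 = 0)" using slope[where x = a1 and y = a2] det_a nonneg by auto
  moreover have "coprime (nat a1) (nat a2)"
    by (rule coprime_of_unimodular[of _ "nat c2" _ "nat c1"]) (use det nonneg in simp)
  moreover have "coprime (nat c1) (nat c2)"
    by (rule coprime_of_unimodular[of _ "nat a2" _ "nat a1"])
      (use det nonneg in \<open>simp add: abs_minus_commute algebra_simps\<close>)
  ultimately have "(nat a1, nat a2) \<in> markov_dom" "(nat c1, nat c2) \<in> markov_dom"
    unfolding markov_dom_def by auto
  then show ?thesis unfolding markov_split_def using nonneg pq det by auto
qed

lemma unimodular_in_box:
  fixes p q :: int
  assumes "coprime p q" "1 \<le> p" "p < q"
  obtains e1 e2 where "0 < e1" "e1 \<le> p" "0 \<le> e2" "e2 < q" "e1 * q - e2 * p = 1"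
proof -
  obtain u v where uv: "u * p + v * q = 1"
    using bezout_int[of p q] assms(1) by (auto simp: coprime_iff_gcd_eq_1)
  define m where "m = (- u) div q"
  define e2 where "e2 = (- u) mod q"
  define e1 where "e1 = v - m * p"
  have e2: "0 \<le> e2" "e2 < q" unfolding e2_def using assms by auto
  have e2_eq: "e2 = - u - q * m" unfolding e2_def m_def by (simp add: minus_mult_div_eq_mod[symmetric])
  have "e1 * q - e2 * p = u * p + v * q" unfolding e1_def e2_eq by (simp add: algebra_simps)
  with uv have det: "e1 * q - e2 * p = 1" by simp
  have "0 \<le> e2 * p" using e2 assms by simp
  then have "0 < e1 * q" using det by linarith
  then have "0 < e1" using assms by (simp add: zero_less_mult_iff)
  moreover have "e1 * q \<le> p * q"
  proof -
    have "e1 * q = 1 + e2 * p" using det by simp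
    also have "\<dots> \<le> 1 + (q - 1) * p" using e2 assms by (simp add: mult_right_mono)
    also have "\<dots> \<le> p * q" using assms by (simp add: algebra_simps)
    finally show ?thesis .
  qed
  then have "e1 \<le> p" using assms by simp
  ultimately show thesis using that e2 det by blast
qed

lemma unimodular_pair_comparable:
  fixes e1 e2 f1 f2 :: int
  assumes "0 < e1" "0 \<le> e2" "0 \<le> f1" "0 < f2" "e1 * f2 - e2 * f1 = 1" "e1 + f1 < e2 + f2"
  shows "(e1 \<le> f1 \<and> e2 \<le> f2) \<or> (f1 \<le> e1 \<and> f2 \<le> e2)"
proof (rule ccontr)
  assume "\<not> ?thesis"
  then consider "f1 < e1" "e2 < f2" | "e1 < f1" "f2 < e2" by linarith
  then show False
  proof cases
    case 1
    then have "(f1 + 1) * (e2 + 1) \<le> e1 * f2" using assms by (intro mult_mono) auto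
    then have "f1 = 0" "e2 = 0" using assms by (auto simp: algebra_simps)
    then have "e1 = 1" "f2 = 1" using assms by (simp_all add: pos_zmult_eq_1_iff)
    with \<open>f1 = 0\<close> \<open>e2 = 0\<close> assms show False by simp
  next
    case 2
    have "e1 * f2 \<le> f1 * f2" using 2 assms by (intro mult_right_mono) auto
    also have "f1 * f2 < f1 * e2" using 2 assms by (intro mult_strict_left_mono) auto
    finally show False using assms(5) by (simp add: mult.commute)
  qed
qed

lemma markov_split_exists:
  assumes dom: "(p,q) \<in> markov_dom" and base: "(p,q) \<notin> {(1,0), (0,1), (1,1)}"
  obtains x where "markov_split (p,q) x"
proof -
  have "coprime p q" "p \<le> q" using dom base unfolding markov_dom_def by auto
  then have "1 \<le> p" "p < q" using base by (cases "p = 0"; cases "p = q"; auto)+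
  then obtain e1 e2 where e: "0 < e1" "e1 \<le> int p" "0 \<le> e2" "e2 < int q" "e1 * q - e2 * p = 1"
    using unimodular_in_box[of p q] \<open>coprime p q\<close> by auto
  define f1 where "f1 = int p - e1"
  define f2 where "f2 = int q - e2"
  have f: "0 \<le> f1" "0 < f2" unfolding f1_def f2_def using e by auto
  have det: "e1 * f2 - e2 * f1 = 1" unfolding f1_def f2_def using e by (simp add: algebra_simps)
  have pq: "int p < int q" "2 \<le> int q" using \<open>1 \<le> p\<close> \<open>p < q\<close> by auto
  then have "(e1 \<le> f1 \<and> e2 \<le> f2) \<or> (f1 \<le> e1 \<and> f2 \<le> e2)"
    using unimodular_pair_comparable[OF e(1,3) f det] by (simp add: f1_def f2_def)
  then show thesis
  proof
    assume "e1 \<le> f1 \<and> e2 \<le> f2"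
    then have "markov_split (nat p, nat q) (nat (f1 - e1), nat (f2 - e2), nat e1, nat e2)"
      by (intro markov_splitI) (use e pq det in \<open>auto simp: f1_def f2_def algebra_simps abs_minus_commute\<close>)
    with that show thesis by auto
  next
    assume "f1 \<le> e1 \<and> f2 \<le> e2"
    then have "markov_split (nat p, nat q) (nat (e1 - f1), nat (e2 - f2), nat f1, nat f2)"
      by (intro markov_splitI) (use f pq det in \<open>auto simp: f1_def f2_def algebra_simps\<close>)
    with that show thesis by auto
  qed
qed

lemma markov_split_props:
  assumes "markov_split (p,q) (a,b,c,d)"
  shows "(p,q) \<in> markov_dom" "(p,q) \<notin> {(1,0), (0,1), (1,1)}"
    "a + b < p + q" "c + d < p + q" "(a+c) + (b+d) < p + q"
proof -
  have h: "\<bar>int a * int d - int b * int c\<bar> = 1" "a + 2*c \<le> b + 2*d" "p = a+2*c" "q = b+2*d"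
    using assms unfolding markov_split_def by auto
  have "\<bar>int p * int d - int q * int c\<bar> = 1" using h by (simp add: algebra_simps)
  then have "coprime p q" by (rule coprime_of_unimodular)
  then show "(p,q) \<in> markov_dom" using h unfolding markov_dom_def by auto
  have "c + d > 0" using h by (cases "c + d = 0") auto
  then show "a + b < p + q" "c + d < p + q" "(a+c) + (b+d) < p + q" using h by auto
  show "(p,q) \<notin> {(1,0), (0,1), (1,1)}"
  proof
    assume "(p,q) \<in> {(1,0), (0,1), (1,1)}"
    then have "p \<le> 1" "q \<le> 1" by auto
    then have "c = 0" "d = 0" using h by auto
    then show False using h by simp
  qed
qed

text \<open>The defining relations of \<^const>\<open>markov_rel\<close> determine \<open>M\<close> by well-founded recursion on
  \<open>a + b\<close>; the recursion is consistent because the split of each \<open>(p,q)\<close> is unique.\<close>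

definition markov_step :: "(nat \<times> nat \<Rightarrow> rat3) \<Rightarrow> nat \<times> nat \<Rightarrow> rat3" where
  "markov_step M t = (if t = (1,0) then Y else if t = (0,1) then X else if t = (1,1) then (X^2+Y^2)/Z
     else if (\<exists>x. markov_split t x) then (case (SOME x. markov_split t x) of (a,b,c,d) \<Rightarrow>
        ((M (c,d))^2 + (M (a+c,b+d))^2) / M (a,b)) else 0)"

definition markov_rec :: "nat \<times> nat \<Rightarrow> rat3" where
  "markov_rec = wfrec (measure (\<lambda>(p,q). p+q)) markov_step"

lemma markov_rec_unfold: "markov_rec t = markov_step (cut markov_rec (measure (\<lambda>(p,q). p+q)) t) t"
  unfolding markov_rec_def by (rule wfrec) simp

lemma markov_rec_split:
  assumes split: "markov_split t (a,b,c,d)"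
  shows "markov_rec t = ((markov_rec (c,d))^2 + (markov_rec (a+c,b+d))^2) / markov_rec (a,b)"
proof -
  obtain p q where t: "t = (p,q)" by fastforce
  note props = markov_split_props[OF split[unfolded t]]
  have ex: "\<exists>x. markov_split t x" using split by blast
  have "(SOME x. markov_split t x) = (a,b,c,d)"
    using someI_ex[OF ex] markov_split_unique[OF split] by (metis prod.exhaust)
  moreover have "((c,d), t) \<in> measure (\<lambda>(p,q). p+q)" "((a+c,b+d), t) \<in> measure (\<lambda>(p,q). p+q)"
     "((a,b), t) \<in> measure (\<lambda>(p,q). p+q)" using props t by auto
  ultimately show ?thesis
    using props ex t by (subst markov_rec_unfold) (auto simp: markov_step_def cut_apply)
qed

lemma markov_rel_markov_rec: "markov_rel markov_rec"
proof -
  have "markov_rec p = 0" if "p \<notin> markov_dom" for p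
  proof -
    have "\<not> (\<exists>x. markov_split p x)" using that markov_split_props(1) by (metis prod.exhaust)
    moreover have "p \<noteq> (1,0)" "p \<noteq> (0,1)" "p \<noteq> (1,1)" using that unfolding markov_dom_def by auto
    ultimately show ?thesis by (subst markov_rec_unfold) (simp add: markov_step_def)
  qed
  moreover have "markov_rec (1,0) = Y" "markov_rec (0,1) = X" "markov_rec (1,1) = (X^2+Y^2)/Z"
    by (subst markov_rec_unfold; simp add: markov_step_def)+
  ultimately show ?thesis
    unfolding markov_rel_def by (auto intro: markov_rec_split simp: markov_split_def)
qed

lemma markov_rel_unique:
  assumes "markov_rel M1" "markov_rel M2"
  shows "M1 t = M2 t"
proof (induct t rule: measure_induct_rule[of "\<lambda>(p,q). p+q"])
  case (less t)
  obtain p q where t: "t = (p,q)" by fastforce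
  show ?case
  proof (cases "t \<in> markov_dom \<and> t \<notin> {(1,0), (0,1), (1,1)}")
    case False
    then show ?thesis using assms t unfolding markov_rel_def by auto
  next
    case True
    then obtain a b c d where split: "markov_split (p,q) (a,b,c,d)"
      using markov_split_exists t by (metis prod.exhaust)
    then have rel: "M t = ((M (c,d))^2 + (M (a+c,b+d))^2) / M (a,b)" if "markov_rel M" for M
      using that unfolding t markov_rel_def markov_split_def by auto
    have "M1 (a,b) = M2 (a,b)" "M1 (c,d) = M2 (c,d)" "M1 (a+c,b+d) = M2 (a+c,b+d)"
      using less markov_split_props[OF split] t by auto
    then show ?thesis using rel[OF assms(1)] rel[OF assms(2)] by simp
  qed
qed

lemma markov_rel_markov_M: "markov_rel markov_M"
proof -
  have "\<exists>!M. markov_rel M"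
    using markov_rel_markov_rec markov_rel_unique by (metis ext)
  then show ?thesis unfolding markov_M_def by (rule theI')
qed

section \<open>Integer polynomials in three variables\<close>

definition is_ring_hom :: "('a::comm_ring_1 \<Rightarrow> 'b::comm_ring_1) \<Rightarrow> bool" where
  "is_ring_hom f \<longleftrightarrow> (\<forall>a b. f (a + b) = f a + f b) \<and> (\<forall>a b. f (a * b) = f a * f b) \<and> f 1 = 1"

context
  fixes f :: "'a::comm_ring_1 \<Rightarrow> 'b::comm_ring_1"
  assumes hom: "is_ring_hom f"
begin

lemma ring_hom_add: "f (a + b) = f a + f b"
  using hom unfolding is_ring_hom_def by blast

lemma ring_hom_mult: "f (a * b) = f a * f b"
  using hom unfolding is_ring_hom_def by blast

lemma ring_hom_one: "f 1 = 1"
  using hom unfolding is_ring_hom_def by blast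

lemma ring_hom_zero: "f 0 = 0"
  using ring_hom_add[of 0 0] by simp

lemma ring_hom_uminus: "f (- a) = - f a"
  using ring_hom_add[of a "- a"] ring_hom_zero by (simp add: eq_neg_iff_add_eq_0 add.commute)

lemma ring_hom_diff: "f (a - b) = f a - f b"
  using ring_hom_add[of a "- b"] ring_hom_uminus[of b] by simp

lemma ring_hom_power: "f (a ^ n) = f a ^ n"
  by (induct n) (simp_all add: ring_hom_one ring_hom_mult)

lemma ring_hom_of_int: "f (of_int n) = of_int n"
proof -
  have "f (of_nat m) = of_nat m" for m
    by (induct m) (simp_all add: ring_hom_zero ring_hom_add ring_hom_one)
  then show ?thesis by (cases n rule: int_cases2) (simp_all add: ring_hom_uminus)
qed

lemma ring_hom_sum: "f (sum g A) = (\<Sum>x\<in>A. f (g x))"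
  using sum_comp_morphism[of f g A] ring_hom_zero ring_hom_add by (simp add: comp_def)

lemma map_poly_add_ring_hom: "map_poly f (p + q) = map_poly f p + map_poly f q"
  by (rule poly_eqI) (simp add: coeff_map_poly ring_hom_zero ring_hom_add)

lemma map_poly_mult_ring_hom: "map_poly f (p * q) = map_poly f p * map_poly f q"
proof (induct p)
  case (pCons a p)
  have "map_poly f (pCons a p * q) = map_poly f (smult a q) + map_poly f (pCons 0 (p * q))"
    by (simp add: map_poly_add_ring_hom)
  also have "\<dots> = smult (f a) (map_poly f q) + pCons 0 (map_poly f p * map_poly f q)"
    using pCons by (simp add: map_poly_smult map_poly_pCons ring_hom_zero ring_hom_mult)
  also have "\<dots> = map_poly f (pCons a p) * map_poly f q"
    by (simp add: map_poly_pCons ring_hom_zero)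
  finally show ?case .
qed simp

lemma is_ring_hom_map_poly: "is_ring_hom (map_poly f)"
  unfolding is_ring_hom_def
  by (simp add: map_poly_add_ring_hom map_poly_mult_ring_hom ring_hom_one)

end

lemma is_ring_hom_comp: "is_ring_hom f \<Longrightarrow> is_ring_hom g \<Longrightarrow> is_ring_hom (f \<circ> g)"
  unfolding is_ring_hom_def by simp

lemma is_ring_hom_poly: "is_ring_hom (\<lambda>p. poly p x)"
  unfolding is_ring_hom_def by simp

lemma is_ring_hom_of_int: "is_ring_hom of_int"
  unfolding is_ring_hom_def by simp

lemma is_ring_hom_frac: "is_ring_hom frac"
  unfolding is_ring_hom_def frac_def by (simp add: One_fract_def)

abbreviation monom3 :: "int \<Rightarrow> nat \<Rightarrow> nat \<Rightarrow> nat \<Rightarrow> poly3" where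
  "monom3 c i j k \<equiv> monom (monom (monom c i) j) k"

lemma monom3_eq: "monom3 c i j k = of_int c * varX^i * varY^j * varZ^k"
  unfolding varX_def varY_def varZ_def
  by (simp add: monom_0[symmetric] monom_power mult_monom of_int_poly)

lemma var_monom3: "varX = monom3 1 1 0 0" "varY = monom3 1 0 1 0" "varZ = monom3 1 0 0 1"
  using monom3_eq[of 1 1 0 0] monom3_eq[of 1 0 1 0] monom3_eq[of 1 0 0 1] by simp_all

lemma poly3_expand:
  "P = (\<Sum>k\<le>degree P. \<Sum>j\<le>degree (coeff P k). \<Sum>i\<le>degree (coeff (coeff P k) j).
      monom3 (coeff3 P i j k) i j k)"
proof -
  have "P = (\<Sum>k\<le>degree P. monom (coeff P k) k)" by (simp add: poly_as_sum_of_monoms)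
  also have "\<dots> = (\<Sum>k\<le>degree P. \<Sum>j\<le>degree (coeff P k). monom (monom (coeff (coeff P k) j) j) k)"
    by (intro sum.cong refl) (subst monom_sum[symmetric], simp add: poly_as_sum_of_monoms)
  also have "\<dots> = (\<Sum>k\<le>degree P. \<Sum>j\<le>degree (coeff P k). \<Sum>i\<le>degree (coeff (coeff P k) j).
      monom3 (coeff3 P i j k) i j k)"
    by (intro sum.cong refl) (subst monom_sum[symmetric], subst monom_sum[symmetric],
        simp add: poly_as_sum_of_monoms coeff3_def)
  finally show ?thesis .
qed

lemma sq_subst_expand:
  "sq_subst P = (\<Sum>k\<le>degree P. \<Sum>j\<le>degree (coeff P k). \<Sum>i\<le>degree (coeff (coeff P k) j).
      monom3 (coeff3 P i j k) (2*i) (2*j) (2*k))"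
  by (simp add: sq_subst_def monom3_eq)

definition eval3 :: "'a::comm_ring_1 \<Rightarrow> 'a \<Rightarrow> 'a \<Rightarrow> poly3 \<Rightarrow> 'a" where
  "eval3 x y z P = poly (map_poly (\<lambda>q. poly (map_poly (\<lambda>r. poly (map_poly of_int r) x) q) y) P) z"

lemma is_ring_hom_eval3: "is_ring_hom (eval3 x y z)"
proof -
  have "eval3 x y z = (\<lambda>p. poly p z) \<circ> map_poly ((\<lambda>q. poly q y) \<circ>
      map_poly ((\<lambda>r. poly r x) \<circ> map_poly of_int))"
    by (simp add: fun_eq_iff eval3_def comp_def)
  then show ?thesis
    by (simp only: is_ring_hom_comp is_ring_hom_poly is_ring_hom_map_poly is_ring_hom_of_int)
qed

lemma eval3_monom3: "eval3 x y z (monom3 c i j k) = of_int c * x^i * y^j * z^k"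
  by (simp add: eval3_def map_poly_monom poly_monom)

lemma eval3_vars: "eval3 x y z varX = x" "eval3 x y z varY = y" "eval3 x y z varZ = z"
  unfolding var_monom3 eval3_monom3 by simp_all

lemma eval3_expand:
  "eval3 x y z P = (\<Sum>k\<le>degree P. \<Sum>j\<le>degree (coeff P k). \<Sum>i\<le>degree (coeff (coeff P k) j).
      of_int (coeff3 P i j k) * x^i * y^j * z^k)"
  by (subst poly3_expand) (simp add: ring_hom_sum[OF is_ring_hom_eval3] eval3_monom3)

lemma ring_hom_eval3:
  assumes "is_ring_hom h"
  shows "h (eval3 x y z P) = eval3 (h x) (h y) (h z) P"
  by (simp add: eval3_expand ring_hom_sum[OF assms] ring_hom_mult[OF assms]
      ring_hom_power[OF assms] ring_hom_of_int[OF assms])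

lemma sq_subst_eval3: "sq_subst P = eval3 (varX^2) (varY^2) (varZ^2) P"
  by (simp add: sq_subst_def eval3_expand power_mult)

lemma frac_sq_subst: "frac (sq_subst P) = eval3 (X^2) (Y^2) (Z^2) P"
  by (simp add: sq_subst_eval3 ring_hom_eval3[OF is_ring_hom_frac] ring_hom_power[OF is_ring_hom_frac]
      X_def Y_def Z_def)

lemma coeff3_monom3: "coeff3 (monom3 c i j k) a b d = (if i = a \<and> j = b \<and> k = d then c else 0)"
  unfolding coeff3_def by auto

lemma coeff3_sum: "coeff3 (sum g A) a b c = (\<Sum>x\<in>A. coeff3 (g x) a b c)"
  unfolding coeff3_def by (simp add: coeff_sum)

lemma coeff3_add: "coeff3 (P + Q) a b c = coeff3 P a b c + coeff3 Q a b c"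
  unfolding coeff3_def by simp

lemma coeff3_diff: "coeff3 (P - Q) a b c = coeff3 P a b c - coeff3 Q a b c"
  unfolding coeff3_def by simp

lemma coeff3_mult: "coeff3 (P * Q) i j k =
  (\<Sum>a\<le>k. \<Sum>b\<le>j. \<Sum>c\<le>i. coeff3 P c b a * coeff3 Q (i-c) (j-b) (k-a))"
  by (simp only: coeff3_def coeff_mult coeff_sum)

lemma coeff3_eq_0:
  "\<not> (c \<le> degree P \<and> b \<le> degree (coeff P c) \<and> a \<le> degree (coeff (coeff P c) b)) \<Longrightarrow> coeff3 P a b c = 0"
  unfolding coeff3_def by (metis coeff_0 coeff_eq_0 not_le_imp_less)

lemma poly3_eqI: "(\<And>a b c. coeff3 P a b c = coeff3 Q a b c) \<Longrightarrow> P = Q"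
  unfolding coeff3_def by (intro poly_eqI) blast

lemma sum_delta3:
  assumes "finite A" "\<And>k. finite (B k)" "\<And>k j. finite (C k j)"
  shows "(\<Sum>k\<in>A. \<Sum>j\<in>B k. \<Sum>i\<in>C k j. if i = a \<and> j = b \<and> k = c then f i j k else 0)
     = (if c \<in> A \<and> b \<in> B c \<and> a \<in> C c b then f a b c else 0)"
proof -
  have "(\<Sum>i\<in>C k j. if i = a \<and> j = b \<and> k = c then f i j k else 0) =
    (if j = b \<and> k = c then (if a \<in> C k j then f a j k else 0) else 0)" for k j
    using assms by (cases "j = b \<and> k = c") (auto simp: sum.delta)
  moreover have "(\<Sum>j\<in>B k. if j = b \<and> k = c then (if a \<in> C k j then f a j k else 0) else 0) =
    (if k = c then (if b \<in> B k \<and> a \<in> C k b then f a b k else 0) else 0)" for k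
    using assms by (cases "k = c") (auto simp: sum.delta)
  ultimately show ?thesis using assms by (simp add: sum.delta)
qed

lemma coeff3_sq_subst: "coeff3 (sq_subst P) (2*a) (2*b) (2*c) = coeff3 P a b c"
proof -
  have "coeff3 (sq_subst P) (2*a) (2*b) (2*c) =
     (\<Sum>k\<le>degree P. \<Sum>j\<le>degree (coeff P k). \<Sum>i\<le>degree (coeff (coeff P k) j).
      if i = a \<and> j = b \<and> k = c then coeff3 P i j k else 0)"
    by (simp add: sq_subst_expand coeff3_sum coeff3_monom3)
  also have "\<dots> = coeff3 P a b c"
    using coeff3_eq_0[of c P b a] by (subst sum_delta3) auto
  finally show ?thesis .
qed

lemma sq_subst_inject: "sq_subst P = sq_subst Q \<Longrightarrow> P = Q"
  by (rule poly3_eqI) (metis coeff3_sq_subst)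

lemma frac_eq_0_iff: "frac p = 0 \<longleftrightarrow> p = 0"
  unfolding frac_def by (simp add: Zero_fract_def eq_fract)

lemma XYZ_nonzero: "X \<noteq> 0" "Y \<noteq> 0" "Z \<noteq> 0"
  by (simp_all add: X_def Y_def Z_def frac_eq_0_iff var_monom3 monom_eq_0_iff)

lemma coeff3_monom3_mult:
  "coeff3 (monom3 c i0 j0 k0 * P) i j k =
    (if i0 \<le> i \<and> j0 \<le> j \<and> k0 \<le> k then c * coeff3 P (i-i0) (j-j0) (k-k0) else 0)"
proof -
  have "coeff3 (monom3 c i0 j0 k0 * P) i j k =
    (\<Sum>a\<le>k. \<Sum>b\<le>j. \<Sum>d\<le>i. if d = i0 \<and> b = j0 \<and> a = k0 then c * coeff3 P (i-d) (j-b) (k-a) else 0)"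
    unfolding coeff3_mult coeff3_monom3 by (intro sum.cong refl) auto
  also have "\<dots> = (if i0 \<le> i \<and> j0 \<le> j \<and> k0 \<le> k then c * coeff3 P (i-i0) (j-j0) (k-k0) else 0)"
    by (subst sum_delta3) auto
  finally show ?thesis .
qed

lemma homogeneous3_mult:
  assumes "homogeneous3 P m" "homogeneous3 Q n"
  shows "homogeneous3 (P * Q) (m + n)"
  unfolding homogeneous3_def
proof (intro allI impI)
  fix i j k assume "coeff3 (P * Q) i j k \<noteq> 0"
  then obtain a b c where abc: "a \<le> k" "b \<le> j" "c \<le> i"
    and nz: "coeff3 P c b a * coeff3 Q (i-c) (j-b) (k-a) \<noteq> 0"
    unfolding coeff3_mult by (metis (no_types, lifting) atMost_iff sum.neutral)
  then have "c + b + a = m" "(i-c) + (j-b) + (k-a) = n"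
    using assms unfolding homogeneous3_def by (metis mult_not_zero)+
  then show "i + j + k = m + n" using abc by linarith
qed

lemma homogeneous3_add: "homogeneous3 P m \<Longrightarrow> homogeneous3 Q m \<Longrightarrow> homogeneous3 (P + Q) m"
  unfolding homogeneous3_def coeff3_add by (metis add.right_neutral)

lemma homogeneous3_diff: "homogeneous3 P m \<Longrightarrow> homogeneous3 Q m \<Longrightarrow> homogeneous3 (P - Q) m"
  unfolding homogeneous3_def coeff3_diff by (metis diff_zero)

lemma homogeneous3_monom3: "homogeneous3 (monom3 c i j k) (i + j + k)"
  unfolding homogeneous3_def coeff3_monom3 by auto

lemma homogeneous3_one: "homogeneous3 1 0"
  using homogeneous3_monom3[of 1 0 0 0] by (simp add: monom_0 one_pCons)

lemma homogeneous3_vars: "homogeneous3 varX 1" "homogeneous3 varY 1" "homogeneous3 varZ 1"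
  unfolding var_monom3 using homogeneous3_monom3 by (metis add_0 add.right_neutral)+

lemma homogeneous3_power: "homogeneous3 P m \<Longrightarrow> homogeneous3 (P ^ n) (n * m)"
  by (induct n) (simp_all add: homogeneous3_one homogeneous3_mult)

section \<open>The ray of slopes \<open>k/(k+1)\<close>\<close>

fun ray_P :: "nat \<Rightarrow> poly3" where
  "ray_P 0 = 1"
| "ray_P (Suc 0) = varX * varZ + (varX + varY)^2"
| "ray_P (Suc (Suc k)) =
     (varX + varY) * (varX + varY + varZ) * ray_P (Suc k) - varX * varY * varZ^2 * ray_P k"

lemma homogeneous3_ray_P: "homogeneous3 (ray_P k) (2 * k)"
proof (induct k rule: ray_P.induct)
  case 1
  then show ?case by (simp add: homogeneous3_one)
next
  case 2
  have "homogeneous3 (varX * varZ) (1 + 1)" "homogeneous3 ((varX + varY)^2) (2 * 1)"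
    by (intro homogeneous3_mult homogeneous3_power homogeneous3_add homogeneous3_vars)+
  then show ?case unfolding one_add_one mult_1_right by (simp add: homogeneous3_add)
next
  case (3 k)
  have "homogeneous3 ((varX + varY) * (varX + varY + varZ) * ray_P (Suc k)) ((1 + 1) + 2 * Suc k)"
    by (intro homogeneous3_mult homogeneous3_add homogeneous3_vars 3)
  moreover have "homogeneous3 (varX * varY * varZ^2 * ray_P k) ((1 + 1 + 2 * 1) + 2 * k)"
    by (intro homogeneous3_mult homogeneous3_power homogeneous3_vars 3)
  ultimately show ?case by (simp add: homogeneous3_diff)
qed

lemma ray_P_at_ones:
  "1 \<le> eval3 (1::int) 1 1 (ray_P k) \<and> eval3 (1::int) 1 1 (ray_P k) \<le> eval3 1 1 1 (ray_P (Suc k))"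
proof -
  note hom = is_ring_hom_eval3[of "1::int" 1 1]
  have "eval3 1 1 1 (ray_P (Suc (Suc k))) =
      6 * eval3 1 1 1 (ray_P (Suc k)) - (eval3 1 1 1 (ray_P k) :: int)" for k
    by (simp add: ring_hom_diff[OF hom] ring_hom_mult[OF hom] ring_hom_add[OF hom]
        ring_hom_power[OF hom] eval3_vars)
  moreover have "eval3 1 1 1 (ray_P 0) = (1::int)" "eval3 1 1 1 (ray_P (Suc 0)) = (5::int)"
    by (simp_all add: ring_hom_one[OF hom] ring_hom_mult[OF hom] ring_hom_add[OF hom]
        ring_hom_power[OF hom] eval3_vars)
  ultimately show ?thesis by (induct k) (simp_all del: ray_P.simps)
qed

lemma ray_P_nonzero: "ray_P k \<noteq> 0"
proof
  assume "ray_P k = 0"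
  then show False using ray_P_at_ones[of k] by (simp add: ring_hom_zero[OF is_ring_hom_eval3])
qed

lemma casoratian_recurrence:
  fixes A B s0 s1 s2 s3 :: "'a::comm_ring_1"
  assumes "s3 = A*s2 - B*s1" "s2 = A*s1 - B*s0"
  shows "s3*s1 - s2^2 = B*(s2*s0 - s1^2)"
  unfolding assms(1) unfolding assms(2) by (simp add: algebra_simps power2_eq_square)

lemma exchange_quotients:
  fixes s1 s2 s3 W d0 d1 d2 :: "'a::field"
  assumes "s1 \<noteq> 0" "d0 \<noteq> 0" "d1 \<noteq> 0" "d2 \<noteq> 0"
    and "s3 * s1 = s2^2 + W^2 * d1^2" "d2 * d0 = d1^2"
  shows "(W^2 + (s2/d1)^2) / (s1/d0) = s3/d2"
proof -
  have s3: "s3 = (s2^2 + W^2 * d1^2) / s1" and d2: "d2 = d1^2 / d0"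
    using assms by (simp_all add: field_simps)
  show ?thesis unfolding s3 d2 using assms(1-3) by (simp add: field_simps power2_eq_square)
qed

definition ray_S :: "nat \<Rightarrow> rat3" where
  "ray_S k = eval3 (X^2) (Y^2) (Z^2) (ray_P k)"

text \<open>The denominator \<open>x\<^sup>k\<^sup>-\<^sup>1 y\<^sup>k z\<^sup>2\<^sup>k\<close> of \<open>M\<^sub>k\<^sub>/\<^sub>(\<^sub>k\<^sub>+\<^sub>1\<^sub>)\<close>; the division by \<open>X\<close>
  instead of the exponent \<open>k - 1\<close> keeps \<open>M\<^sub>0\<^sub>/\<^sub>1 = x\<close> in the same pattern.\<close>

definition ray_den :: "nat \<Rightarrow> rat3" where
  "ray_den k = X^k * Y^k * Z^(2*k) / X"

lemma ray_den_nonzero: "ray_den k \<noteq> 0"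
  using XYZ_nonzero by (simp add: ray_den_def)

lemma ray_den_geometric: "ray_den (Suc (Suc k)) * ray_den k = (ray_den (Suc k))^2"
  using XYZ_nonzero by (simp add: ray_den_def field_simps power2_eq_square)

lemma ray_S_rec:
  "ray_S (Suc (Suc k)) = (X^2 + Y^2) * (X^2 + Y^2 + Z^2) * ray_S (Suc k) - X^2 * Y^2 * (Z^2)^2 * ray_S k"
  "ray_S 0 = 1" "ray_S (Suc 0) = X^2 * Z^2 + (X^2 + Y^2)^2"
  by (simp_all add: ray_S_def ring_hom_diff[OF is_ring_hom_eval3] ring_hom_mult[OF is_ring_hom_eval3]
      ring_hom_add[OF is_ring_hom_eval3] ring_hom_power[OF is_ring_hom_eval3]
      ring_hom_one[OF is_ring_hom_eval3] eval3_vars)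

lemma ray_S_nonzero: "ray_S k \<noteq> 0"
proof
  assume "ray_S k = 0"
  then have "sq_subst (ray_P k) = sq_subst 0"
    by (simp add: ray_S_def frac_sq_subst[symmetric] frac_eq_0_iff sq_subst_eval3
        ring_hom_zero[OF is_ring_hom_eval3])
  then show False using sq_subst_inject ray_P_nonzero by blast
qed

lemma ray_S_casoratian:
  "ray_S (Suc (Suc k)) * ray_S k - (ray_S (Suc k))^2 = ((X^2 + Y^2) / Z)^2 * (ray_den (Suc k))^2"
proof (induct k)
  case 0
  show ?case using XYZ_nonzero
    by (simp add: ray_S_rec ray_den_def field_simps power2_eq_square)
next
  case (Suc k)
  have "ray_S (Suc (Suc (Suc k))) * ray_S (Suc k) - (ray_S (Suc (Suc k)))^2 =
      X^2 * Y^2 * (Z^2)^2 * (((X^2 + Y^2) / Z)^2 * (ray_den (Suc k))^2)"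
    using casoratian_recurrence[OF ray_S_rec(1) ray_S_rec(1)] Suc by simp
  also have "\<dots> = ((X^2 + Y^2) / Z)^2 * (ray_den (Suc (Suc k)))^2"
    using XYZ_nonzero by (simp add: ray_den_def field_simps power2_eq_square)
  finally show ?case .
qed

lemma markov_M_base: "markov_M (1,0) = Y" "markov_M (0,1) = X" "markov_M (1,1) = (X^2 + Y^2) / Z"
  using markov_rel_markov_M unfolding markov_rel_def by auto

lemma markov_M_eq:
  assumes "(a,b) \<in> markov_dom" "(c,d) \<in> markov_dom" "\<bar>int a * int d - int b * int c\<bar> = 1"
    "a + 2*c \<le> b + 2*d"
  shows "markov_M (a + 2*c, b + 2*d) = ((markov_M (c,d))^2 + (markov_M (a+c, b+d))^2) / markov_M (a,b)"
  using markov_rel_markov_M assms unfolding markov_rel_def by blast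

lemma markov_M_ray: "markov_M (k, k+1) = ray_S k / ray_den k"
proof (induct k rule: ray_P.induct)
  case 1
  show ?case using markov_M_base(2) XYZ_nonzero by (simp add: ray_S_rec ray_den_def)
next
  case 2
  have "markov_M (1, 2) = ((markov_M (0,1))^2 + (markov_M (1,1))^2) / markov_M (1,0)"
    using markov_M_eq[of 1 0 0 1] by (simp add: markov_dom_def numeral_2_eq_2)
  also have "\<dots> = ray_S 1 / ray_den 1"
    unfolding markov_M_base using XYZ_nonzero
    by (simp add: ray_S_rec ray_den_def field_simps power2_eq_square)
  finally show ?case by (simp add: numeral_2_eq_2)
next
  case (3 k)
  have "coprime k (Suc k)" by simp
  then have "markov_M (k + 2*1, Suc k + 2*1) =
      ((markov_M (1,1))^2 + (markov_M (k+1, Suc k+1))^2) / markov_M (k, Suc k)"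
    by (intro markov_M_eq) (auto simp: markov_dom_def)
  also have "\<dots> = (((X^2 + Y^2) / Z)^2 + (ray_S (Suc k) / ray_den (Suc k))^2) / (ray_S k / ray_den k)"
    using 3 markov_M_base(3) by simp
  also have "\<dots> = ray_S (Suc (Suc k)) / ray_den (Suc (Suc k))"
    by (rule exchange_quotients)
      (use ray_S_nonzero ray_den_nonzero ray_S_casoratian ray_den_geometric in \<open>simp_all add: algebra_simps\<close>)
  finally show ?case by (simp add: numeral_2_eq_2)
qed

lemma markov_P_ray:
  assumes "1 \<le> k"
  shows "markov_P k (k+1) = ray_P k"
proof -
  have exps: "k + 1 - 1 = k" "k + (k+1) - 1 = 2*k" by simp_all
  have den: "frac (varX^(k-1) * varY^k * varZ^(2*k)) = ray_den k"
  proof -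
    have "X^k = X * X^(k-1)" using assms by (simp add: power_eq_if)
    then show ?thesis using XYZ_nonzero
      by (simp add: ray_den_def X_def Y_def Z_def ring_hom_mult[OF is_ring_hom_frac]
          ring_hom_power[OF is_ring_hom_frac] mult_2)
  qed
  show ?thesis
    unfolding markov_P_def exps
  proof (rule the_equality)
    show "homogeneous3 (ray_P k) (2*k) \<and>
        markov_M (k, k+1) = frac (sq_subst (ray_P k)) / frac (varX^(k-1) * varY^k * varZ^(2*k))"
      unfolding den frac_sq_subst markov_M_ray ray_S_def using homogeneous3_ray_P[of k] by simp
    fix P assume "homogeneous3 P (2*k) \<and>
        markov_M (k, k+1) = frac (sq_subst P) / frac (varX^(k-1) * varY^k * varZ^(2*k))"
    then have "frac (sq_subst P) = frac (sq_subst (ray_P k))"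
      using ray_den_nonzero[of k] unfolding den markov_M_ray frac_sq_subst ray_S_def by simp
    then have "sq_subst P = sq_subst (ray_P k)"
      using frac_eq_0_iff[of "sq_subst P - sq_subst (ray_P k)"]
      by (simp add: ring_hom_diff[OF is_ring_hom_frac])
    then show "P = ray_P k" by (rule sq_subst_inject)
  qed
qed

lemma ray_P_mod_u: "\<exists>T. ray_P (Suc k) = varY^(k+2) * (varY + varZ)^k + varX * T"
proof (induct k)
  case 0
  show ?case by (rule exI[of _ "varZ + varX + 2 * varY"]) (simp add: algebra_simps power2_eq_square)
next
  case (Suc k)
  then obtain T where T: "ray_P (Suc k) = varY^(k+2) * (varY + varZ)^k + varX * T" by blast
  have "ray_P (Suc (Suc k)) = varY^(k+3) * (varY + varZ)^(Suc k) + varX *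
      ((2*varY + varZ + varX) * (varY^(k+2) * (varY + varZ)^k)
       + (varX + varY) * (varX + varY + varZ) * T - varY * varZ^2 * ray_P k)"
    by (simp add: T algebra_simps power2_eq_square eval_nat_numeral)
  then show ?case by (auto simp: eval_nat_numeral)
qed

text \<open>In the induction step the two new contributions to \<open>u v\<^sup>k\<^sup>+\<^sup>3 w\<^sup>k\<^sup>+\<^sup>2\<close>, from
  \<open>u w \<cdot> v\<^sup>k\<^sup>+\<^sup>3 (v+w)\<^sup>k\<^sup>+\<^sup>1\<close> and from \<open>- u v w\<^sup>2 \<cdot> v\<^sup>k\<^sup>+\<^sup>2 (v+w)\<^sup>k\<close>, cancel, so the
  coefficient \<open>4\<close> is inherited along the ray.\<close>

lemma ray_P_mod_u2: "\<exists>H S. ray_P (Suc (Suc k)) = varY^(k+3) * (varY + varZ)^(k+1) +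
    varX * varY^(k+2) * (4 * varZ^(k+1) + varY * H) + varX^2 * S"
proof (induct k)
  case 0
  show ?case
    by (rule exI[of _ 4],
        rule exI[of _ "varZ^2 + 5*varY*varZ + 6*varY^2 + 2*varX*varZ + 4*varX*varY + varX^2"])
      (simp add: algebra_simps power2_eq_square eval_nat_numeral)
next
  case (Suc k)
  then obtain H S where HS: "ray_P (Suc (Suc k)) = varY^(k+3) * (varY + varZ)^(k+1) +
    varX * varY^(k+2) * (4 * varZ^(k+1) + varY * H) + varX^2 * S" by blast
  obtain T where T: "ray_P (Suc k) = varY^(k+2) * (varY + varZ)^k + varX * T"
    using ray_P_mod_u by blast
  define p where "p = varY^(k+2)"
  define q where "q = (varY + varZ)^k"
  define r where "r = varZ^(k+1)"
  have HS': "ray_P (Suc (Suc k)) =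
      varY * p * ((varY + varZ) * q) + varX * p * (4 * r + varY * H) + varX^2 * S"
    unfolding HS p_def q_def r_def by (simp add: algebra_simps eval_nat_numeral del: ray_P.simps)
  have T': "ray_P (Suc k) = p * q + varX * T" unfolding T p_def q_def by simp
  define H' where "H' = 4 * r + (varY + varZ) * H + (2*varY + 3*varZ) * q"
  define R where "R = p * (4 * r + varY * H)"
  define Q where "Q = varY * p * ((varY + varZ) * q)"
  define S' where "S' = varY * (varY + varZ) * S + (2*varY + varZ) * R + Q
     + varX * ((2*varY + varZ) * S + R) + varX^2 * S - varY * varZ^2 * T"
  have "ray_P (Suc (Suc (Suc k))) = varY^2 * p * ((varY + varZ)^2 * q)
      + varX * (varY * p) * (4 * (varZ * r) + varY * H') + varX^2 * S'"
    unfolding ray_P.simps(3)[of "Suc k"] HS' T' H'_def S'_def R_def Q_def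
    by (simp add: algebra_simps power2_eq_square)
  moreover have "varY^2 * p = varY^(Suc k + 3)" "(varY + varZ)^2 * q = (varY + varZ)^(Suc k + 1)"
     "varY * p = varY^(Suc k + 2)" "varZ * r = varZ^(Suc k + 1)"
    unfolding p_def q_def r_def by (simp_all add: power_add eval_nat_numeral)
  ultimately show ?case by (metis mult.assoc)
qed

lemma coeff3_ray_P: "coeff3 (ray_P (Suc (Suc k))) 1 (k+2) (k+1) = 4"
proof -
  obtain H S where HS: "ray_P (Suc (Suc k)) = varY^(k+3) * (varY + varZ)^(k+1) +
    varX * varY^(k+2) * (4 * varZ^(k+1) + varY * H) + varX^2 * S" using ray_P_mod_u2 by blast
  have y: "varY^(k+3) = monom3 1 0 (k+3) 0" "varY = monom3 1 0 1 0"
    and xy: "varX * varY^(k+2) = monom3 1 1 (k+2) 0"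
    and z: "4 * varZ^(k+1) = monom3 4 0 0 (k+1)"
    and x: "varX^2 = monom3 1 2 0 0"
    by (subst monom3_eq; simp)+
  have "coeff3 (varY^(k+3) * (varY + varZ)^(k+1)) 1 (k+2) (k+1) = 0"
    unfolding y(1) coeff3_monom3_mult by simp
  moreover have "coeff3 (varY * H) 0 0 (k+1) = 0" "coeff3 (varX^2 * S) 1 (k+2) (k+1) = 0"
    unfolding x y(2) coeff3_monom3_mult by simp_all
  moreover have "coeff3 (varX * varY^(k+2) * (4 * varZ^(k+1) + varY * H)) 1 (k+2) (k+1) =
      coeff3 (4 * varZ^(k+1)) 0 0 (k+1) + coeff3 (varY * H) 0 0 (k+1)"
    unfolding xy coeff3_monom3_mult by (simp add: coeff3_add)
  moreover have "coeff3 (4 * varZ^(k+1)) 0 0 (k+1) = 4"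
    unfolding z coeff3_monom3 by simp
  ultimately show ?thesis unfolding HS coeff3_add by simp
qed

theorem theorem9p1:
  fixes n :: nat
  assumes "n \<ge> 2"
  shows "coeff3 (markov_P n (n+1)) 1 n (n-1) = 4"
proof -
  obtain k where n: "n = Suc (Suc k)" using assms by (metis add_2_eq_Suc le_Suc_ex)
  then have "markov_P n (n+1) = ray_P (Suc (Suc k))" using markov_P_ray[of n] by simp
  then show ?thesis using coeff3_ray_P[of k] n by simp
qed

end
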